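(* Let $n\ge2$, let $v\in C^0(\mathbb R^n)$ be quasi-concave, and suppose $v\in C^\infty(U)$ for some domain $U\subset\mathbb R^n$. Then on the open set $\{x\in U: Dv(x)\neq0\}$, $$\mathrm{div}\Big(|Dv|^{-2}\big(\Delta v\,Dv-D^2v\,Dv\big)\Big)\ge0 .$$
   Context: A function $f\in C^0(\mathbb R^n)$ is quasi-concave if $f(\lambda x+(1-\lambda)y)\ge\min\{f(x),f(y)\}$ for all $x,y\in\mathbb R^n$, $\lambda\in[0,1]$; equivalently, every nonempty super level set $\{f>t\}$ is convex. *)

theory Defs
  imports "HOL-Analysis.Analysis"
begin

definition quasi_concave :: "(real^'n \<Rightarrow> real) \<Rightarrow> bool" where
  "quasi_concave f \<longleftrightarrow>
     (\<forall>x y. \<forall>l::real. 0 \<le> l \<and> l \<le> 1 \<longrightarrow> f (l *\<^sub>R x + (1 - l) *\<^sub>R y) \<ge> min (f x) (f y))"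

definition pd :: "'n::finite \<Rightarrow> (real^'n \<Rightarrow> real) \<Rightarrow> real^'n \<Rightarrow> real" where
  "pd i f x = deriv (\<lambda>t. f (x + t *\<^sub>R axis i 1)) 0"

fun iter_pd :: "'n::finite list \<Rightarrow> (real^'n \<Rightarrow> real) \<Rightarrow> real^'n \<Rightarrow> real" where
  "iter_pd [] f = f"
| "iter_pd (i # is) f = pd i (iter_pd is f)"

definition smooth_on :: "(real^'n::finite) set \<Rightarrow> (real^'n \<Rightarrow> real) \<Rightarrow> bool" where
  "smooth_on U f \<longleftrightarrow>
     (\<forall>is. continuous_on U (iter_pd is f) \<and>
        (\<forall>x\<in>U. \<forall>i. ((\<lambda>t. iter_pd is f (x + t *\<^sub>R axis i 1))
                       has_real_derivative pd i (iter_pd is f) x) (at 0)))"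

definition grad :: "(real^'n::finite \<Rightarrow> real) \<Rightarrow> real^'n \<Rightarrow> real^'n" where
  "grad f x = (\<chi> i. pd i f x)"

definition hessian :: "(real^'n::finite \<Rightarrow> real) \<Rightarrow> real^'n \<Rightarrow> real^'n^'n" where
  "hessian f x = (\<chi> i j. pd i (pd j f) x)"

definition laplacian :: "(real^'n::finite \<Rightarrow> real) \<Rightarrow> real^'n \<Rightarrow> real" where
  "laplacian f x = (\<Sum>i\<in>UNIV. pd i (pd i f) x)"

definition divergence :: "(real^'n::finite \<Rightarrow> real^'n) \<Rightarrow> real^'n \<Rightarrow> real" where
  "divergence F x = (\<Sum>i\<in>UNIV. pd i (\<lambda>y. F y $ i) x)"

end

theory Submission
  imports Defs
begin

text \<open>Write \<open>g = Dv(x) \<noteq> 0\<close>, \<open>H = D\<^sup>2v(x)\<close> and \<open>N = |g|\<^sup>2\<close>. Quasi-concavity makes \<open>H\<close>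
  negative semidefinite on the orthogonal complement of \<open>g\<close>: if \<open>w \<bullet> g = 0\<close> and
  \<open>w \<bullet> H w > 0\<close>, then on the parabola \<open>t \<mapsto> x + t w + c t\<^sup>2 g\<close> with \<open>c = - w \<bullet> H w / (4 N)\<close>
  the function \<open>v\<close> exceeds \<open>v(x)\<close> for small \<open>t \<noteq> 0\<close> of either sign, while at the midpoint
  \<open>x + c t\<^sup>2 g\<close> of the points for \<open>t\<close> and \<open>-t\<close> it is below \<open>v(x)\<close>, because \<open>c < 0\<close>.
  Expanding the divergence, the third derivatives cancel by symmetry and \<open>N\<^sup>2\<close> times the divergence
  is \<open>N ((tr H)\<^sup>2 - |H|\<^sup>2) - 2 (tr H g \<bullet> H g - |H g|\<^sup>2)\<close>. This is \<open>((tr B)\<^sup>2 - |B|\<^sup>2) / N\<^sup>3\<close> for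
  \<open>B = - P H P\<close>, \<open>P = N I - g g\<^sup>T\<close>, which is positive semidefinite; and \<open>(tr B)\<^sup>2 \<ge> |B|\<^sup>2\<close>
  for such \<open>B\<close> because \<open>B\<^sub>i\<^sub>j\<^sup>2 \<le> B\<^sub>i\<^sub>i B\<^sub>j\<^sub>j\<close>.\<close>

lemma smooth_on_has_pd:
  assumes "smooth_on U f" "y \<in> U"
  shows "((\<lambda>t. iter_pd is f (y + t *\<^sub>R axis i 1)) has_real_derivative pd i (iter_pd is f) y) (at 0)"
  using assms unfolding smooth_on_def by blast

lemma smooth_on_continuous_iter_pd:
  assumes "smooth_on U f"
  shows "continuous_on U (iter_pd is f)"
  using assms unfolding smooth_on_def by blast

lemma pd_eqI:
  "((\<lambda>t. f (x + t *\<^sub>R axis i 1)) has_real_derivative D) (at 0) \<Longrightarrow> pd i f x = D"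
  unfolding pd_def by (rule DERIV_imp_deriv)

lemma DERIV_along_line:
  fixes G :: "'a::real_normed_vector \<Rightarrow> real"
  assumes "\<And>y. y \<in> U \<Longrightarrow> ((\<lambda>u. G (y + u *\<^sub>R e)) has_real_derivative D y) (at 0)"
    and "p + s *\<^sub>R e \<in> U"
  shows "((\<lambda>s. G (p + s *\<^sub>R e)) has_real_derivative D (p + s *\<^sub>R e)) (at s)"
proof -
  have "((\<lambda>u. G ((p + s *\<^sub>R e) + u *\<^sub>R e)) has_real_derivative D (p + s *\<^sub>R e)) (at 0)"
    using assms by blast
  moreover have "(\<lambda>u. G ((p + s *\<^sub>R e) + u *\<^sub>R e)) = (\<lambda>u. G (p + (u + s) *\<^sub>R e))"
    by (simp add: algebra_simps scaleR_add_left)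
  ultimately show ?thesis
    using DERIV_shift[of "\<lambda>s. G (p + s *\<^sub>R e)" _ 0 s] by simp
qed

lemma DERIV_linearization_bound:
  fixes f f' :: "real \<Rightarrow> real"
  assumes "\<And>s. s \<in> closed_segment 0 b \<Longrightarrow> (f has_real_derivative f' s) (at s)"
    and "\<And>s. s \<in> closed_segment 0 b \<Longrightarrow> \<bar>f' s - c\<bar> \<le> e"
  shows "\<bar>f b - f 0 - c * b\<bar> \<le> e * \<bar>b\<bar>"
proof -
  have "norm ((f b - c * b) - (f 0 - c * 0)) \<le> e * norm (b - 0)"
  proof (rule field_differentiable_bound[of "closed_segment 0 b" "\<lambda>s. f s - c * s" "\<lambda>s. f' s - c"])
    fix s assume s: "s \<in> closed_segment 0 b"
    have "((\<lambda>s. f s - c * s) has_field_derivative f' s - c * 1) (at s)"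
      by (intro DERIV_diff DERIV_cmult assms(1)[OF s] DERIV_ident)
    then show "((\<lambda>s. f s - c * s) has_field_derivative f' s - c) (at s within closed_segment 0 b)"
      by (simp add: has_field_derivative_at_within)
    show "norm (f' s - c) \<le> e" using assms(2)[OF s] by simp
  qed (simp_all add: ends_in_segment)
  then show ?thesis by simp
qed

lemma eventually_nhds_dist_less:
  assumes "isCont f z" "e > 0"
  shows "\<forall>\<^sub>F y in nhds z. dist (f y) (f z) < e"
  using assms(1) unfolding isCont_def tendsto_at_iff_tendsto_nhds by (rule tendstoD) (rule assms(2))

lemma sum_axis_increment_bound:
  fixes F :: "real^'n \<Rightarrow> real" and h :: "real^'n"
  assumes der: "\<And>y i. y \<in> U \<Longrightarrow> ((\<lambda>u. F (y + u *\<^sub>R axis i 1)) has_real_derivative D i y) (at 0)"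
    and near: "\<And>y. norm (y - z) \<le> norm h \<Longrightarrow> y \<in> U \<and> (\<forall>i. \<bar>D i y - D i z\<bar> \<le> e)"
    and "finite S"
  shows "\<bar>F (z + (\<Sum>i\<in>S. h$i *\<^sub>R axis i 1)) - F z - (\<Sum>i\<in>S. D i z * h$i)\<bar>
           \<le> e * (\<Sum>i\<in>S. \<bar>h$i\<bar>)"
  using \<open>finite S\<close>
proof induct
  case empty
  then show ?case by simp
next
  case (insert a S)
  define p where "p = z + (\<Sum>i\<in>S. h$i *\<^sub>R axis i 1)"
  have near_line: "norm ((p + s *\<^sub>R axis a 1) - z) \<le> norm h" if "\<bar>s\<bar> \<le> \<bar>h$a\<bar>" for s
  proof (rule norm_le_componentwise_cart)
    fix k
    have "(\<Sum>i\<in>S. h$i *\<^sub>R axis i (1::real)) $ k = (if k \<in> S then h$k else 0)"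
      using insert(1) by (simp add: sum_component axis_def if_distrib[of "\<lambda>c. _ * c"] sum.delta cong: if_cong)
    then show "norm ((p + s *\<^sub>R axis a 1 - z) $ k) \<le> norm (h $ k)"
      using that insert(2) by (auto simp: p_def axis_def)
  qed
  have step: "\<bar>F (p + h$a *\<^sub>R axis a 1) - F p - D a z * h$a\<bar> \<le> e * \<bar>h$a\<bar>"
  proof -
    have "\<bar>(\<lambda>s. F (p + s *\<^sub>R axis a 1)) (h$a) - (\<lambda>s. F (p + s *\<^sub>R axis a 1)) 0 - D a z * h$a\<bar>
        \<le> e * \<bar>h$a\<bar>"
    proof (rule DERIV_linearization_bound[where f' = "\<lambda>s. D a (p + s *\<^sub>R axis a 1)"])
      fix s assume "s \<in> closed_segment 0 (h$a)"
      then have "\<bar>s\<bar> \<le> \<bar>h$a\<bar>" by (auto simp: closed_segment_eq_real_ivl split: if_splits)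
      from near[OF near_line[OF this]]
      show "((\<lambda>s. F (p + s *\<^sub>R axis a 1)) has_real_derivative D a (p + s *\<^sub>R axis a 1)) (at s)"
        and "\<bar>D a (p + s *\<^sub>R axis a 1) - D a z\<bar> \<le> e"
        using DERIV_along_line[OF der] by blast+
    qed
    then show ?thesis by simp
  qed
  have sum_insert: "z + (\<Sum>i\<in>insert a S. h$i *\<^sub>R axis i 1) = p + h$a *\<^sub>R axis a 1"
    using insert(1,2) by (simp add: p_def algebra_simps)
  have "\<bar>F (p + h$a *\<^sub>R axis a 1) - F z - (\<Sum>i\<in>insert a S. D i z * h$i)\<bar>
      \<le> \<bar>F (p + h$a *\<^sub>R axis a 1) - F p - D a z * h$a\<bar> + \<bar>F p - F z - (\<Sum>i\<in>S. D i z * h$i)\<bar>"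
    using insert(1,2) by simp
  also have "\<dots> \<le> e * \<bar>h$a\<bar> + e * (\<Sum>i\<in>S. \<bar>h$i\<bar>)"
    using step insert(3)[folded p_def] by (rule add_mono)
  finally show ?case
    unfolding sum_insert using insert(1,2) by (simp add: distrib_left)
qed

lemma has_derivative_continuous_partials:
  fixes F :: "real^'n \<Rightarrow> real"
  assumes der: "\<And>y i. y \<in> U \<Longrightarrow> ((\<lambda>u. F (y + u *\<^sub>R axis i 1)) has_real_derivative D i y) (at 0)"
    and cont: "\<And>i. continuous_on U (D i)" and U: "open U" and z: "z \<in> U"
  shows "(F has_derivative (\<lambda>h. \<Sum>i\<in>UNIV. D i z * h$i)) (at z)"
  unfolding has_derivative_at_alt
proof (intro conjI allI impI)
  show "bounded_linear (\<lambda>h::real^'n. \<Sum>i\<in>UNIV. D i z * h$i)"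
    unfolding linear_conv_bounded_linear[symmetric]
    by (rule linearI) (auto simp: sum.distrib sum_distrib_left algebra_simps)
  fix e :: real assume "e > 0"
  define e' where "e' = e / CARD('n)"
  have "e' > 0" using \<open>e > 0\<close> by (simp add: e'_def)
  have "\<forall>\<^sub>F y in nhds z. \<forall>i. dist (D i y) (D i z) < e'"
    using cont U z \<open>e' > 0\<close>
    by (intro eventually_all_finite eventually_nhds_dist_less) (auto simp: continuous_on_eq_continuous_at)
  with eventually_nhds_in_open[OF U z]
  have "\<forall>\<^sub>F y in nhds z. y \<in> U \<and> (\<forall>i. \<bar>D i y - D i z\<bar> \<le> e')"
    by eventually_elim (auto simp: dist_real_def less_imp_le)
  then obtain d where "d > 0" and d: "\<And>y. dist y z < d \<Longrightarrow> y \<in> U \<and> (\<forall>i. \<bar>D i y - D i z\<bar> \<le> e')"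
    unfolding eventually_nhds_metric by blast
  show "\<exists>d>0. \<forall>y. norm (y - z) < d \<longrightarrow>
      norm (F y - F z - (\<Sum>i\<in>UNIV. D i z * (y - z) $ i)) \<le> e * norm (y - z)"
  proof (intro exI[of _ d] conjI allI impI \<open>d > 0\<close>)
    fix y assume y: "norm (y - z) < d"
    have "\<bar>F (z + (\<Sum>i\<in>UNIV. (y - z)$i *\<^sub>R axis i 1)) - F z - (\<Sum>i\<in>UNIV. D i z * (y - z)$i)\<bar>
        \<le> e' * (\<Sum>i\<in>UNIV. \<bar>(y - z)$i\<bar>)"
      by (rule sum_axis_increment_bound[OF der]) (use y d in \<open>auto simp: dist_norm\<close>)
    also have "\<dots> \<le> e' * (CARD('n) * norm (y - z))"
      using sum_bounded_above[of UNIV "\<lambda>i. \<bar>(y - z)$i\<bar>" "norm (y - z)"]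
        component_le_norm_cart[of "y - z"] \<open>e' > 0\<close>
      by (intro mult_left_mono) (auto simp del: vector_minus_component)
    finally show "norm (F y - F z - (\<Sum>i\<in>UNIV. D i z * (y - z) $ i)) \<le> e * norm (y - z)"
      using basis_expansion[of "y - z"] by (simp add: e'_def scalar_mult_eq_scaleR)
  qed
qed

lemma smooth_on_has_derivative:
  assumes "smooth_on U f" "open U" "z \<in> U"
  shows "(iter_pd is f has_derivative (\<lambda>h. grad (iter_pd is f) z \<bullet> h)) (at z)"
proof -
  have "(iter_pd is f has_derivative (\<lambda>h. \<Sum>i\<in>UNIV. pd i (iter_pd is f) z * h$i)) (at z)"
    using assms smooth_on_has_pd[OF assms(1)] smooth_on_continuous_iter_pd[OF assms(1), of "_ # is"]
    by (intro has_derivative_continuous_partials[where U = U]) auto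
  then show ?thesis by (simp add: inner_vec_def grad_def)
qed

section \<open>Symmetry of mixed partial derivatives\<close>

definition mixed_difference :: "(real^'n \<Rightarrow> real) \<Rightarrow> real^'n \<Rightarrow> 'n \<Rightarrow> 'n \<Rightarrow> real \<Rightarrow> real" where
  "mixed_difference F z i j t =
     F (z + t *\<^sub>R axis i 1 + t *\<^sub>R axis j 1) - F (z + t *\<^sub>R axis i 1) - F (z + t *\<^sub>R axis j 1) + F z"

lemma mixed_difference_commute: "mixed_difference F z i j t = mixed_difference F z j i t"
  by (simp add: mixed_difference_def algebra_simps)

lemma mixed_difference_MVT:
  fixes F :: "real^'n \<Rightarrow> real"
  assumes dF: "\<And>y k. y \<in> U \<Longrightarrow> ((\<lambda>u. F (y + u *\<^sub>R axis k 1)) has_real_derivative pd k F y) (at 0)"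
    and dG: "\<And>y k. y \<in> U \<Longrightarrow>
               ((\<lambda>u. pd i F (y + u *\<^sub>R axis k 1)) has_real_derivative pd k (pd i F) y) (at 0)"
    and "t > 0"
    and square: "\<And>s r. 0 \<le> s \<Longrightarrow> s \<le> t \<Longrightarrow> 0 \<le> r \<Longrightarrow> r \<le> t \<Longrightarrow> z + s *\<^sub>R axis i 1 + r *\<^sub>R axis j 1 \<in> U"
  obtains s r where "0 < s" "s < t" "0 < r" "r < t"
    "mixed_difference F z i j t = t\<^sup>2 * pd j (pd i F) (z + s *\<^sub>R axis i 1 + r *\<^sub>R axis j 1)"
proof -
  define ei where "ei = axis i (1::real)"
  define ej where "ej = axis j (1::real)"
  define g where "g s = F (z + t *\<^sub>R ej + s *\<^sub>R ei) - F (z + s *\<^sub>R ei)" for s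
  have dg: "(g has_real_derivative pd i F (z + t *\<^sub>R ej + s *\<^sub>R ei) - pd i F (z + s *\<^sub>R ei)) (at s)"
    if "0 \<le> s" "s \<le> t" for s
    unfolding g_def ei_def
    using square[OF that, of t] square[OF that, of 0] \<open>t > 0\<close>
    by (intro DERIV_diff DERIV_along_line[where U = U, OF dF]) (auto simp: ej_def algebra_simps)
  then obtain s where s: "0 < s" "s < t"
    "g t - g 0 = t * (pd i F (z + t *\<^sub>R ej + s *\<^sub>R ei) - pd i F (z + s *\<^sub>R ei))"
    using MVT2[OF \<open>t > 0\<close> dg] by auto
  define k where "k r = pd i F (z + s *\<^sub>R ei + r *\<^sub>R ej)" for r
  have dk: "(k has_real_derivative pd j (pd i F) (z + s *\<^sub>R ei + r *\<^sub>R ej)) (at r)"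
    if "0 \<le> r" "r \<le> t" for r
    unfolding k_def ej_def
    using square[of s r] s that by (intro DERIV_along_line[where U = U, OF dG]) (auto simp: ei_def)
  then obtain r where r: "0 < r" "r < t" "k t - k 0 = t * pd j (pd i F) (z + s *\<^sub>R ei + r *\<^sub>R ej)"
    using MVT2[OF \<open>t > 0\<close> dk] by auto
  have "mixed_difference F z i j t = g t - g 0"
    by (simp add: mixed_difference_def g_def ei_def ej_def algebra_simps)
  also have "\<dots> = t * (k t - k 0)"
    using s(3) by (simp add: k_def algebra_simps)
  also have "\<dots> = t\<^sup>2 * pd j (pd i F) (z + s *\<^sub>R ei + r *\<^sub>R ej)"
    using r(3) by (simp add: power2_eq_square)
  finally show ?thesis
    using that s r unfolding ei_def ej_def by blast
qed

lemma mixed_difference_tendsto: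
  fixes F :: "real^'n \<Rightarrow> real"
  assumes dF: "\<And>y k. y \<in> U \<Longrightarrow> ((\<lambda>u. F (y + u *\<^sub>R axis k 1)) has_real_derivative pd k F y) (at 0)"
    and dG: "\<And>y k. y \<in> U \<Longrightarrow>
               ((\<lambda>u. pd i F (y + u *\<^sub>R axis k 1)) has_real_derivative pd k (pd i F) y) (at 0)"
    and cont: "continuous_on U (pd j (pd i F))" and U: "open U" and z: "z \<in> U"
  shows "((\<lambda>t. mixed_difference F z i j t / t\<^sup>2) \<longlongrightarrow> pd j (pd i F) z) (at_right 0)"
proof (rule tendstoI)
  fix e :: real assume "e > 0"
  have "isCont (pd j (pd i F)) z" using cont U z continuous_on_eq_continuous_at by blast
  with eventually_nhds_in_open[OF U z] eventually_nhds_dist_less[OF _ \<open>e > 0\<close>]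
  have "\<forall>\<^sub>F y in nhds z. y \<in> U \<and> dist (pd j (pd i F) y) (pd j (pd i F) z) < e"
    by (simp add: eventually_conj_iff)
  then obtain d where "d > 0"
    and d: "\<And>y. dist y z < d \<Longrightarrow> y \<in> U \<and> dist (pd j (pd i F) y) (pd j (pd i F) z) < e"
    unfolding eventually_nhds_metric by blast
  have near: "dist (z + s *\<^sub>R axis i 1 + r *\<^sub>R axis j 1) z < d"
    if "0 \<le> s" "s \<le> t" "0 \<le> r" "r \<le> t" "t < d / 2" for s r t
  proof -
    have "norm (s *\<^sub>R axis i (1::real) + r *\<^sub>R axis j 1) \<le> s + r"
      using norm_triangle_ineq[of "s *\<^sub>R axis i (1::real)" "r *\<^sub>R axis j 1"] that by simp
    then show ?thesis using that by (simp add: dist_norm add.assoc)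
  qed
  have "\<forall>\<^sub>F t in at_right 0. t \<in> {0<..<d / 2}"
    using \<open>d > 0\<close> by (intro eventually_at_right_real) simp
  then show "\<forall>\<^sub>F t in at_right 0. dist (mixed_difference F z i j t / t\<^sup>2) (pd j (pd i F) z) < e"
  proof eventually_elim
    case (elim t)
    then have "t > 0" "t < d / 2" by auto
    have square: "z + s *\<^sub>R axis i 1 + r *\<^sub>R axis j 1 \<in> U"
      if "0 \<le> s" "s \<le> t" "0 \<le> r" "r \<le> t" for s r
      using d near that \<open>t < d / 2\<close> by blast
    obtain s r where sr: "0 < s" "s < t" "0 < r" "r < t"
      "mixed_difference F z i j t = t\<^sup>2 * pd j (pd i F) (z + s *\<^sub>R axis i 1 + r *\<^sub>R axis j 1)"
      using mixed_difference_MVT[OF dF dG \<open>t > 0\<close> square] by blast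
    then show ?case
      using d[OF near[of s t r]] \<open>t > 0\<close> \<open>t < d / 2\<close> by simp
  qed
qed

text \<open>Both mixed partial derivatives are the limit of the same second difference quotient.\<close>

lemma smooth_on_pd_commute:
  assumes sm: "smooth_on U f" and U: "open U" and z: "z \<in> U"
  shows "pd i (pd j (iter_pd is f)) z = pd j (pd i (iter_pd is f)) z"
proof -
  have "((\<lambda>t. mixed_difference (iter_pd is f) z i j t / t\<^sup>2) \<longlongrightarrow> pd j (pd i (iter_pd is f)) z) (at_right 0)"
    "((\<lambda>t. mixed_difference (iter_pd is f) z j i t / t\<^sup>2) \<longlongrightarrow> pd i (pd j (iter_pd is f)) z) (at_right 0)"
    using smooth_on_has_pd[OF sm] smooth_on_has_pd[OF sm, of _ "i # is"] smooth_on_has_pd[OF sm, of _ "j # is"]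
      smooth_on_continuous_iter_pd[OF sm, of "j # i # is"] smooth_on_continuous_iter_pd[OF sm, of "i # j # is"]
    by (auto intro!: mixed_difference_tendsto[OF _ _ _ U z])
  then show ?thesis
    unfolding mixed_difference_commute[of _ z j i] by (rule tendsto_unique[OF trivial_limit_at_right_real, rotated])
qed

lemma smooth_on_hessian_symmetric:
  assumes "smooth_on U v" "open U" "x \<in> U"
  shows "transpose (hessian v x) = hessian v x"
  using smooth_on_pd_commute[OF assms, of _ _ "[]"] by (simp add: transpose_def hessian_def vec_eq_iff)

lemma smooth_on_third_pd_commute:
  assumes sm: "smooth_on U v" and U: "open U" and x: "x \<in> U"
  shows "pd i (pd k (pd k v)) x = pd k (pd k (pd i v)) x"
proof -
  have "pd i (pd k (pd k v)) x = pd k (pd i (pd k v)) x"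
    using smooth_on_pd_commute[OF sm U x, of i k "[k]"] by simp
  also have "\<dots> = pd k (pd k (pd i v)) x"
  proof -
    have "\<forall>\<^sub>F t in nhds 0. pd i (pd k v) (x + t *\<^sub>R axis k 1) = pd k (pd i v) (x + t *\<^sub>R axis k 1)"
    proof -
      have "((\<lambda>t. x + t *\<^sub>R axis k 1) \<longlongrightarrow> x) (nhds 0)"
        using filterlim_ident[of "nhds (0::real)"] by (auto intro!: tendsto_eq_intros)
      from topological_tendstoD[OF this U x] show ?thesis
        by eventually_elim (use smooth_on_pd_commute[OF sm U, of _ i k "[]"] in simp)
    qed
    then show ?thesis
      unfolding pd_def[of k "pd i (pd k v)"] pd_def[of k "pd k (pd i v)"] by (rule deriv_cong_ev) simp
  qed
  finally show ?thesis .
qed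

section \<open>Quasi-concavity and the Hessian\<close>

lemma DERIV_strict_local_min:
  fixes \<phi> \<psi> :: "real \<Rightarrow> real"
  assumes "\<delta> > 0" and d\<phi>: "\<And>t. \<bar>t\<bar> < \<delta> \<Longrightarrow> (\<phi> has_real_derivative \<psi> t) (at t)"
    and "\<psi> 0 = 0" and d\<psi>: "(\<psi> has_real_derivative q) (at 0)" and "q > 0"
  obtains d where "d > 0" "\<And>t. t \<noteq> 0 \<Longrightarrow> \<bar>t\<bar> < d \<Longrightarrow> \<phi> 0 < \<phi> t"
proof -
  obtain d1 where "d1 > 0" and right: "\<And>h. 0 < h \<Longrightarrow> h < d1 \<Longrightarrow> 0 < \<psi> h"
    using DERIV_pos_inc_right[OF d\<psi> \<open>q > 0\<close>] \<open>\<psi> 0 = 0\<close> by auto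
  obtain d2 where "d2 > 0" and left: "\<And>h. 0 < h \<Longrightarrow> h < d2 \<Longrightarrow> \<psi> (- h) < 0"
    using DERIV_pos_inc_left[OF d\<psi> \<open>q > 0\<close>] \<open>\<psi> 0 = 0\<close> by auto
  show ?thesis
  proof (rule that[of "min \<delta> (min d1 d2)"])
    show "min \<delta> (min d1 d2) > 0" using \<open>\<delta> > 0\<close> \<open>d1 > 0\<close> \<open>d2 > 0\<close> by simp
    fix t assume "t \<noteq> 0" and t: "\<bar>t\<bar> < min \<delta> (min d1 d2)"
    show "\<phi> 0 < \<phi> t"
    proof (cases "t > 0")
      case True
      have "\<exists>z. 0 < z \<and> z < t \<and> \<phi> t - \<phi> 0 = (t - 0) * \<psi> z"
        using t by (intro MVT2 True d\<phi>) auto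
      then obtain z where "0 < z" "z < t" "\<phi> t - \<phi> 0 = (t - 0) * \<psi> z" by blast
      moreover have "\<psi> z > 0" using right \<open>0 < z\<close> \<open>z < t\<close> t by simp
      moreover have "0 < t * \<psi> z" using True \<open>\<psi> z > 0\<close> by simp
      ultimately show ?thesis unfolding diff_zero by linarith
    next
      case False
      with \<open>t \<noteq> 0\<close> have "t < 0" by simp
      have "\<exists>z. t < z \<and> z < 0 \<and> \<phi> 0 - \<phi> t = (0 - t) * \<psi> z"
        using t by (intro MVT2 \<open>t < 0\<close> d\<phi>) auto
      then obtain z where "t < z" "z < 0" "\<phi> 0 - \<phi> t = (0 - t) * \<psi> z" by blast
      moreover have "\<psi> z < 0" using left[of "- z"] \<open>t < z\<close> \<open>z < 0\<close> t by simp
      moreover have "0 < t * \<psi> z" using \<open>t < 0\<close> \<open>\<psi> z < 0\<close> by (simp add: mult_neg_neg)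
      ultimately show ?thesis unfolding diff_0 by linarith
    qed
  qed
qed

lemma has_real_derivative_comp_curve:
  assumes "(\<gamma> has_vector_derivative \<gamma>') (at t)"
    and "(f has_derivative (\<lambda>h. g \<bullet> h)) (at (\<gamma> t))"
  shows "((\<lambda>t. f (\<gamma> t)) has_real_derivative g \<bullet> \<gamma>') (at t)"
  using diff_chain_at[OF assms(1)[unfolded has_vector_derivative_def] assms(2)]
  unfolding has_field_derivative_def comp_def
  by (rule has_derivative_eq_rhs) (simp add: fun_eq_iff mult.commute)

lemma inner_hessian_eq_sum:
  "u \<bullet> (hessian v x *v w) = (\<Sum>l\<in>UNIV. \<Sum>k\<in>UNIV. pd k (pd l v) x * u$k * w$l)"
  by (subst sum.swap) (simp add: inner_vec_def matrix_vector_mult_def hessian_def sum_distrib_left mult_ac)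

lemma smooth_on_DERIV_grad_inner_curve:
  fixes v :: "real^'n \<Rightarrow> real" and \<gamma> \<beta> :: "real \<Rightarrow> real^'n"
  assumes sm: "smooth_on U v" and U: "open U" and x: "x \<in> U"
    and d\<gamma>: "(\<gamma> has_vector_derivative \<gamma>') (at 0)" and "\<gamma> 0 = x"
    and d\<beta>: "\<And>l. ((\<lambda>t. \<beta> t $ l) has_real_derivative \<beta>' $ l) (at 0)"
  shows "((\<lambda>t. grad v (\<gamma> t) \<bullet> \<beta> t) has_real_derivative
           \<gamma>' \<bullet> (hessian v x *v \<beta> 0) + grad v x \<bullet> \<beta>') (at 0)"
proof -
  have "((\<lambda>t. pd l v (\<gamma> t)) has_real_derivative grad (pd l v) x \<bullet> \<gamma>') (at 0)" for l
    using has_real_derivative_comp_curve[OF d\<gamma>, where f = "pd l v"]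
      smooth_on_has_derivative[OF sm U x, of "[l]"] \<open>\<gamma> 0 = x\<close> by simp
  from DERIV_mult[OF this d\<beta>]
  have "((\<lambda>t. \<Sum>l\<in>UNIV. pd l v (\<gamma> t) * \<beta> t $ l) has_real_derivative
          (\<Sum>l\<in>UNIV. (grad (pd l v) x \<bullet> \<gamma>') * \<beta> 0 $ l + \<beta>' $ l * pd l v x)) (at 0)"
    using \<open>\<gamma> 0 = x\<close> by (intro DERIV_sum) simp
  moreover have "(\<Sum>l\<in>UNIV. (grad (pd l v) x \<bullet> \<gamma>') * \<beta> 0 $ l + \<beta>' $ l * pd l v x)
      = \<gamma>' \<bullet> (hessian v x *v \<beta> 0) + grad v x \<bullet> \<beta>'"
    unfolding inner_hessian_eq_sum
    by (simp add: sum.distrib inner_vec_def grad_def sum_distrib_left sum_distrib_right mult_ac)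
  ultimately show ?thesis by (simp add: inner_vec_def grad_def)
qed

lemma smooth_on_curve_strict_local_min:
  fixes v :: "real^'n \<Rightarrow> real"
  assumes sm: "smooth_on U v" and U: "open U" and x: "x \<in> U"
    and w: "w \<bullet> grad v x = 0"
    and pos: "0 < w \<bullet> (hessian v x *v w) + 2 * c * (grad v x \<bullet> grad v x)"
  obtains d where "d > 0" "\<And>t. t \<noteq> 0 \<Longrightarrow> \<bar>t\<bar> < d \<Longrightarrow> v x < v (x + t *\<^sub>R w + (c * t\<^sup>2) *\<^sub>R grad v x)"
proof -
  define g where "g = grad v x"
  define \<gamma> where "\<gamma> t = x + t *\<^sub>R w + (c * t\<^sup>2) *\<^sub>R g" for t
  have d\<gamma>: "(\<gamma> has_vector_derivative w + (2 * c * t) *\<^sub>R g) (at t)" for t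
    unfolding \<gamma>_def by (auto intro!: derivative_eq_intros simp: algebra_simps)
  have \<gamma>0: "\<gamma> 0 = x" by (simp add: \<gamma>_def)
  have "(\<gamma> \<longlongrightarrow> \<gamma> 0) (nhds 0)"
    using has_vector_derivative_continuous[OF d\<gamma>] by (simp add: isCont_def tendsto_at_iff_tendsto_nhds)
  from topological_tendstoD[OF this U] have "\<forall>\<^sub>F t in nhds 0. \<gamma> t \<in> U"
    using x \<gamma>0 by simp
  then obtain \<delta> where "\<delta> > 0" and \<gamma>U: "\<And>t. \<bar>t\<bar> < \<delta> \<Longrightarrow> \<gamma> t \<in> U"
    unfolding eventually_nhds_metric dist_real_def diff_zero by blast
  define \<psi> where "\<psi> t = grad v (\<gamma> t) \<bullet> (w + (2 * c * t) *\<^sub>R g)" for t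
  have d\<phi>: "((\<lambda>t. v (\<gamma> t)) has_real_derivative \<psi> t) (at t)" if "\<bar>t\<bar> < \<delta>" for t
    unfolding \<psi>_def using smooth_on_has_derivative[OF sm U \<gamma>U[OF that], of "[]"]
    by (intro has_real_derivative_comp_curve d\<gamma>) simp
  have "\<psi> 0 = 0" using w by (simp add: \<psi>_def \<gamma>0 g_def inner_commute)
  have "(\<psi> has_real_derivative (w + (2 * c * 0) *\<^sub>R g) \<bullet> (hessian v x *v (w + (2 * c * 0) *\<^sub>R g))
      + grad v x \<bullet> ((2 * c) *\<^sub>R g)) (at 0)"
    unfolding \<psi>_def
    by (rule smooth_on_DERIV_grad_inner_curve[OF sm U x d\<gamma>[of 0] \<gamma>0]) (auto intro!: derivative_eq_intros)
  then have "(\<psi> has_real_derivative w \<bullet> (hessian v x *v w) + 2 * c * (grad v x \<bullet> grad v x)) (at 0)"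
    by (simp add: g_def)
  from DERIV_strict_local_min[OF \<open>\<delta> > 0\<close> d\<phi> \<open>\<psi> 0 = 0\<close> this pos]
  obtain d where "d > 0" and "\<And>t. t \<noteq> 0 \<Longrightarrow> \<bar>t\<bar> < d \<Longrightarrow> v (\<gamma> 0) < v (\<gamma> t)" by blast
  then show ?thesis
    using that unfolding \<gamma>0 unfolding \<gamma>_def g_def by blast
qed

lemma quasi_concaveD:
  "quasi_concave f \<Longrightarrow> 0 \<le> l \<Longrightarrow> l \<le> 1 \<Longrightarrow> min (f x) (f y) \<le> f (l *\<^sub>R x + (1 - l) *\<^sub>R y)"
  unfolding quasi_concave_def by blast

lemma quasi_concave_hessian_tangent_nonpos:
  fixes v :: "real^'n \<Rightarrow> real"
  assumes qc: "quasi_concave v" and sm: "smooth_on U v" and U: "open U" and x: "x \<in> U"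
    and "grad v x \<noteq> 0" and w: "w \<bullet> grad v x = 0"
  shows "w \<bullet> (hessian v x *v w) \<le> 0"
proof (rule ccontr)
  define g where "g = grad v x"
  define q where "q = w \<bullet> (hessian v x *v w)"
  assume "\<not> w \<bullet> (hessian v x *v w) \<le> 0"
  then have "q > 0" by (simp add: q_def)
  have "g \<bullet> g > 0" using \<open>grad v x \<noteq> 0\<close> by (simp add: g_def)
  define c where "c = - q / (4 * (g \<bullet> g))"
  have cg: "c * (g \<bullet> g) = - q / 4" using \<open>g \<bullet> g > 0\<close> by (simp add: c_def)
  obtain d where "d > 0" and rise: "\<And>t. t \<noteq> 0 \<Longrightarrow> \<bar>t\<bar> < d \<Longrightarrow> v x < v (x + t *\<^sub>R w + (c * t\<^sup>2) *\<^sub>R g)"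
    using smooth_on_curve_strict_local_min[OF sm U x w, of c] \<open>q > 0\<close> cg
    unfolding g_def q_def by (auto simp: mult.assoc)
  have d\<mu>: "((\<lambda>s. v (x + s *\<^sub>R (c *\<^sub>R g))) has_real_derivative g \<bullet> (c *\<^sub>R g)) (at 0)"
    using smooth_on_has_derivative[OF sm U x, of "[]"]
    by (intro has_real_derivative_comp_curve) (auto intro!: derivative_eq_intros simp: g_def)
  have "g \<bullet> (c *\<^sub>R g) < 0" using cg \<open>q > 0\<close> by (simp add: mult.commute)
  from DERIV_neg_dec_right[OF d\<mu> this] obtain d' where "d' > 0"
    and fall: "\<And>s. 0 < s \<Longrightarrow> s < d' \<Longrightarrow> v (x + s *\<^sub>R (c *\<^sub>R g)) < v x"
    by auto
  define t where "t = min (min d 1) d' / 2"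
  have "0 < t" "t < d" "t < 1" "t < d'" using \<open>d > 0\<close> \<open>d' > 0\<close> by (auto simp: t_def)
  then have "t\<^sup>2 < d'"
    using mult_strict_left_mono[of t 1 t] unfolding power2_eq_square by linarith
  have mid: "(1/2) *\<^sub>R (x + t *\<^sub>R w + (c * t\<^sup>2) *\<^sub>R g) + (1 - 1/2) *\<^sub>R (x + (- t) *\<^sub>R w + (c * (- t)\<^sup>2) *\<^sub>R g)
      = x + t\<^sup>2 *\<^sub>R (c *\<^sub>R g)"
    by (simp only: vec_eq_iff) (simp add: algebra_simps)
  have "min (v (x + t *\<^sub>R w + (c * t\<^sup>2) *\<^sub>R g)) (v (x + (- t) *\<^sub>R w + (c * (- t)\<^sup>2) *\<^sub>R g))
      \<le> v (x + t\<^sup>2 *\<^sub>R (c *\<^sub>R g))"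
    unfolding mid[symmetric] by (rule quasi_concaveD[OF qc]) simp_all
  also have "\<dots> < v x" using fall \<open>0 < t\<close> \<open>t\<^sup>2 < d'\<close> by simp
  finally show False using rise[of t] rise[of "- t"] \<open>0 < t\<close> \<open>t < d\<close> by simp
qed

section \<open>A trace inequality for tangentially negative semidefinite matrices\<close>

lemma symmetric_inner_matrix_vector:
  fixes H :: "real^'n^'n"
  assumes "transpose H = H"
  shows "x \<bullet> (H *v y) = (H *v x) \<bullet> y"
  by (metis assms dot_lmul_matrix transpose_matrix_vector)

lemma inner_axis_matrix_vector_axis:
  fixes B :: "real^'n^'n"
  shows "axis i 1 \<bullet> (B *v axis j 1) = B$i$j"
  by (simp add: matrix_vector_mult_basis inner_axis' column_def)

lemma psd_entry_sq_le:
  fixes B :: "real^'n^'n"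
  assumes sym: "transpose B = B" and psd: "\<And>w. 0 \<le> w \<bullet> (B *v w)"
  shows "(B$i$j)\<^sup>2 \<le> B$i$i * B$j$j"
proof -
  have Bji: "B$j$i = B$i$j" using sym by (metis transpose_def vec_lambda_beta)
  have Q: "0 \<le> s * s * B$i$i + 2 * s * t * B$i$j + t * t * B$j$j" for s t
  proof -
    have "(s *\<^sub>R axis i 1 + t *\<^sub>R axis j 1) \<bullet> (B *v (s *\<^sub>R axis i 1 + t *\<^sub>R axis j 1))
        = s * s * B$i$i + 2 * s * t * B$i$j + t * t * B$j$j"
      by (simp add: algebra_simps inner_axis_matrix_vector_axis Bji)
    then show ?thesis using psd by metis
  qed
  have "0 \<le> B$i$i" using Q[of 1 0] by simp
  show ?thesis
  proof (cases "B$i$i = 0")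
    case False
    then have "B$i$i > 0" using \<open>0 \<le> B$i$i\<close> by simp
    have "0 \<le> B$i$i * (B$i$i * B$j$j - (B$i$j)\<^sup>2)"
      using Q[of "- B$i$j" "B$i$i"] by (simp add: algebra_simps power2_eq_square)
    then show ?thesis using \<open>B$i$i > 0\<close> by (simp add: zero_le_mult_iff)
  next
    case True
    have "B$i$j = 0"
    proof (rule ccontr)
      assume "B$i$j \<noteq> 0"
      have "0 \<le> 2 * (- (B$j$j + 1) / (2 * B$i$j)) * 1 * B$i$j + 1 * 1 * B$j$j"
        using Q[of "- (B$j$j + 1) / (2 * B$i$j)" 1] True by simp
      also have "\<dots> = - 1" using \<open>B$i$j \<noteq> 0\<close> by (simp add: field_simps)
      finally show False by simp
    qed
    then show ?thesis using True by simp
  qed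
qed

lemma psd_frobenius_le_trace_sq:
  fixes B :: "real^'n^'n"
  assumes "transpose B = B" and "\<And>w. 0 \<le> w \<bullet> (B *v w)"
  shows "(\<Sum>i\<in>UNIV. \<Sum>j\<in>UNIV. (B$i$j)\<^sup>2) \<le> (trace B)\<^sup>2"
proof -
  have "(\<Sum>i\<in>UNIV. \<Sum>j\<in>UNIV. (B$i$j)\<^sup>2) \<le> (\<Sum>i\<in>UNIV. \<Sum>j\<in>UNIV. B$i$i * B$j$j)"
    by (intro sum_mono psd_entry_sq_le[OF assms])
  also have "\<dots> = (trace B)\<^sup>2" by (simp add: trace_def power2_eq_square sum_product)
  finally show ?thesis .
qed

text \<open>\<open>P H P\<close> for \<open>P = (g \<bullet> g) I - g g\<^sup>T\<close>, which is \<open>g \<bullet> g\<close> times the orthogonal projection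
  onto the complement of \<open>g\<close>.\<close>

definition tangential_part :: "real^'n^'n \<Rightarrow> real^'n \<Rightarrow> real^'n^'n" where
  "tangential_part H g = (\<chi> i j. (g \<bullet> g)\<^sup>2 * H$i$j - (g \<bullet> g) * (g$i * (H *v g)$j + (H *v g)$i * g$j)
                                  + (g \<bullet> (H *v g)) * g$i * g$j)"

lemma tangential_part_mult_vec:
  "tangential_part H g *v w = (g \<bullet> g)\<^sup>2 *\<^sub>R (H *v w)
     - (g \<bullet> g) *\<^sub>R (((H *v g) \<bullet> w) *\<^sub>R g + (g \<bullet> w) *\<^sub>R (H *v g)) + ((g \<bullet> (H *v g)) * (g \<bullet> w)) *\<^sub>R g"
proof -
  define N a h where "N = g \<bullet> g" and "a = g \<bullet> (H *v g)" and "h = H *v g"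
  have "(tangential_part H g *v w) $ i
      = (\<Sum>j\<in>UNIV. (N\<^sup>2 * H$i$j - N * (g$i * h$j + h$i * g$j) + a * g$i * g$j) * w$j)" for i
    by (simp add: tangential_part_def matrix_vector_mult_def N_def a_def h_def)
  also have "\<dots> i = N\<^sup>2 * (\<Sum>j\<in>UNIV. H$i$j * w$j)
      - N * (g$i * (\<Sum>j\<in>UNIV. h$j * w$j) + h$i * (\<Sum>j\<in>UNIV. g$j * w$j)) + a * g$i * (\<Sum>j\<in>UNIV. g$j * w$j)" for i
    by (simp add: algebra_simps sum.distrib sum_subtractf sum_distrib_left)
  finally show ?thesis
    unfolding a_def[symmetric] unfolding N_def[symmetric] h_def[symmetric]
    by (simp add: vec_eq_iff matrix_vector_mult_def inner_vec_def algebra_simps)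
qed

lemma tangential_part_quad_form:
  fixes H :: "real^'n^'n"
  assumes sym: "transpose H = H" and u: "u = (g \<bullet> g) *\<^sub>R w - (w \<bullet> g) *\<^sub>R g"
  shows "w \<bullet> (tangential_part H g *v w) = u \<bullet> (H *v u)"
proof -
  have "g \<bullet> (H *v w) = w \<bullet> (H *v g)" "(H *v g) \<bullet> w = w \<bullet> (H *v g)"
    using symmetric_inner_matrix_vector[OF sym] by (simp_all add: inner_commute)
  then show ?thesis
    unfolding u tangential_part_mult_vec
    by (simp add: algebra_simps inner_commute[of g w] power2_eq_square)
qed

lemma trace_tangential_part:
  "trace (tangential_part H g) = (g \<bullet> g)\<^sup>2 * trace H - (g \<bullet> g) * (g \<bullet> (H *v g))"
proof -
  define N a h where "N = g \<bullet> g" and "a = g \<bullet> (H *v g)" and "h = H *v g"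
  have "trace (tangential_part H g) = (\<Sum>i\<in>UNIV. N\<^sup>2 * H$i$i - 2 * N * (g$i * h$i) + a * (g$i * g$i))"
    by (simp add: trace_def tangential_part_def N_def a_def h_def algebra_simps)
  also have "\<dots> = N\<^sup>2 * trace H - 2 * N * (g \<bullet> h) + a * (g \<bullet> g)"
    by (simp add: trace_def inner_vec_def sum.distrib sum_subtractf sum_distrib_left)
  finally show ?thesis by (simp add: N_def a_def h_def algebra_simps)
qed

lemma sum_outer_identities:
  fixes g h :: "real^'n"
  shows "(\<Sum>i\<in>UNIV. \<Sum>j\<in>UNIV. (g$i * h$j + h$i * g$j)\<^sup>2) = 2 * (g \<bullet> g) * (h \<bullet> h) + 2 * (g \<bullet> h)\<^sup>2"
    and "(\<Sum>i\<in>UNIV. \<Sum>j\<in>UNIV. (g$i * h$j + h$i * g$j) * (g$i * g$j)) = 2 * (g \<bullet> g) * (g \<bullet> h)"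
    and "(\<Sum>i\<in>UNIV. \<Sum>j\<in>UNIV. (g$i * g$j)\<^sup>2) = (g \<bullet> g)\<^sup>2"
proof -
  have "(g$i * h$j + h$i * g$j)\<^sup>2
      = (g$i * g$i) * (h$j * h$j) + (h$i * h$i) * (g$j * g$j) + 2 * ((g$i * h$i) * (g$j * h$j))" for i j
    by (simp add: power2_eq_square algebra_simps)
  then show "(\<Sum>i\<in>UNIV. \<Sum>j\<in>UNIV. (g$i * h$j + h$i * g$j)\<^sup>2) = 2 * (g \<bullet> g) * (h \<bullet> h) + 2 * (g \<bullet> h)\<^sup>2"
    by (simp add: sum.distrib sum_distrib_left[symmetric] sum_distrib_right[symmetric]
        inner_vec_def power2_eq_square)
  have "(g$i * h$j + h$i * g$j) * (g$i * g$j) = (g$i * g$i) * (g$j * h$j) + (g$i * h$i) * (g$j * g$j)" for i j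
    by (simp add: algebra_simps)
  then show "(\<Sum>i\<in>UNIV. \<Sum>j\<in>UNIV. (g$i * h$j + h$i * g$j) * (g$i * g$j)) = 2 * (g \<bullet> g) * (g \<bullet> h)"
    by (simp add: sum.distrib sum_distrib_left[symmetric] sum_distrib_right[symmetric] inner_vec_def)
  show "(\<Sum>i\<in>UNIV. \<Sum>j\<in>UNIV. (g$i * g$j)\<^sup>2) = (g \<bullet> g)\<^sup>2"
    by (simp add: inner_vec_def power2_eq_square sum_product mult_ac)
qed

lemma sum_symmetric_matrix_identities:
  fixes H :: "real^'n^'n"
  assumes "transpose H = H"
  shows "(\<Sum>i\<in>UNIV. \<Sum>j\<in>UNIV. H$i$j * (g$i * (H *v g)$j + (H *v g)$i * g$j)) = 2 * ((H *v g) \<bullet> (H *v g))"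
    and "(\<Sum>i\<in>UNIV. \<Sum>j\<in>UNIV. H$i$j * (g$i * g$j)) = g \<bullet> (H *v g)"
proof -
  define h where "h = H *v g"
  have Hg: "(\<Sum>j\<in>UNIV. H$i$j * g$j) = h$i" for i
    by (simp add: h_def matrix_vector_mult_def)
  have "h = g v* H" using assms by (metis h_def transpose_matrix_vector)
  then have gH: "(\<Sum>i\<in>UNIV. g$i * H$i$j) = h$j" for j
    by (simp add: vector_matrix_mult_def mult.commute)
  have "H$i$j * (g$i * h$j + h$i * g$j) = (g$i * H$i$j) * h$j + h$i * (H$i$j * g$j)" for i j
    by (simp add: algebra_simps)
  then have "(\<Sum>i\<in>UNIV. \<Sum>j\<in>UNIV. H$i$j * (g$i * h$j + h$i * g$j))
      = (\<Sum>j\<in>UNIV. (\<Sum>i\<in>UNIV. g$i * H$i$j) * h$j) + (\<Sum>i\<in>UNIV. h$i * (\<Sum>j\<in>UNIV. H$i$j * g$j))"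
    by (simp add: sum.distrib sum_distrib_left sum_distrib_right) (rule sum.swap)
  then show "(\<Sum>i\<in>UNIV. \<Sum>j\<in>UNIV. H$i$j * (g$i * (H *v g)$j + (H *v g)$i * g$j)) = 2 * ((H *v g) \<bullet> (H *v g))"
    by (simp add: gH Hg inner_vec_def h_def[symmetric])
  show "(\<Sum>i\<in>UNIV. \<Sum>j\<in>UNIV. H$i$j * (g$i * g$j)) = g \<bullet> (H *v g)"
    by (simp add: inner_vec_def matrix_vector_mult_def sum_distrib_left mult_ac)
qed

lemma frobenius_tangential_part:
  fixes H :: "real^'n^'n"
  assumes sym: "transpose H = H"
  shows "(\<Sum>i\<in>UNIV. \<Sum>j\<in>UNIV. (tangential_part H g $ i $ j)\<^sup>2)
    = (g \<bullet> g)^4 * (\<Sum>i\<in>UNIV. \<Sum>j\<in>UNIV. (H$i$j)\<^sup>2)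
      - 2 * (g \<bullet> g)^3 * ((H *v g) \<bullet> (H *v g)) + (g \<bullet> g)\<^sup>2 * (g \<bullet> (H *v g))\<^sup>2"
proof -
  define N a h where "N = g \<bullet> g" and "a = g \<bullet> (H *v g)" and "h = H *v g"
  define X where "X i j = g$i * h$j + h$i * g$j" for i j
  have "(tangential_part H g $ i $ j)\<^sup>2 = N^4 * (H$i$j)\<^sup>2 + N\<^sup>2 * (X i j)\<^sup>2 + a\<^sup>2 * (g$i * g$j)\<^sup>2
      - 2 * N^3 * (H$i$j * X i j) + 2 * N\<^sup>2 * a * (H$i$j * (g$i * g$j)) - 2 * N * a * (X i j * (g$i * g$j))"
    for i j
  proof -
    have entry: "tangential_part H g $ i $ j = N\<^sup>2 * H$i$j - N * X i j + a * (g$i * g$j)"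
      by (simp add: tangential_part_def N_def a_def h_def X_def mult.assoc)
    show ?thesis unfolding entry by algebra
  qed
  then have "(\<Sum>i\<in>UNIV. \<Sum>j\<in>UNIV. (tangential_part H g $ i $ j)\<^sup>2)
      = N^4 * (\<Sum>i\<in>UNIV. \<Sum>j\<in>UNIV. (H$i$j)\<^sup>2) + N\<^sup>2 * (\<Sum>i\<in>UNIV. \<Sum>j\<in>UNIV. (X i j)\<^sup>2)
        + a\<^sup>2 * (\<Sum>i\<in>UNIV. \<Sum>j\<in>UNIV. (g$i * g$j)\<^sup>2) - 2 * N^3 * (\<Sum>i\<in>UNIV. \<Sum>j\<in>UNIV. H$i$j * X i j)
        + 2 * N\<^sup>2 * a * (\<Sum>i\<in>UNIV. \<Sum>j\<in>UNIV. H$i$j * (g$i * g$j))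
        - 2 * N * a * (\<Sum>i\<in>UNIV. \<Sum>j\<in>UNIV. X i j * (g$i * g$j))"
    by (simp add: sum.distrib sum_subtractf sum_distrib_left)
  also have "\<dots> = N^4 * (\<Sum>i\<in>UNIV. \<Sum>j\<in>UNIV. (H$i$j)\<^sup>2) - 2 * N^3 * (h \<bullet> h) + N\<^sup>2 * a\<^sup>2"
    unfolding X_def h_def sum_outer_identities sum_symmetric_matrix_identities[OF sym]
    unfolding N_def[symmetric] a_def[symmetric] by algebra
  finally show ?thesis by (simp add: N_def a_def h_def)
qed

lemma tangentially_nsd_trace_inequality:
  fixes H :: "real^'n^'n" and g :: "real^'n"
  assumes sym: "transpose H = H" and "g \<noteq> 0"
    and nsd: "\<And>w. w \<bullet> g = 0 \<Longrightarrow> w \<bullet> (H *v w) \<le> 0"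
  shows "2 * (trace H * (g \<bullet> (H *v g)) - (H *v g) \<bullet> (H *v g))
           \<le> (g \<bullet> g) * ((trace H)\<^sup>2 - (\<Sum>i\<in>UNIV. \<Sum>j\<in>UNIV. (H$i$j)\<^sup>2))"
proof -
  define B where "B = - tangential_part H g"
  have "transpose B = B"
    using sym by (simp add: B_def tangential_part_def vec_eq_iff transpose_def algebra_simps)
  moreover have "0 \<le> w \<bullet> (B *v w)" for w
  proof -
    define u where "u = (g \<bullet> g) *\<^sub>R w - (w \<bullet> g) *\<^sub>R g"
    have "u \<bullet> g = 0" by (simp add: u_def algebra_simps inner_commute)
    moreover have "w \<bullet> (B *v w) = - (u \<bullet> (H *v u))"
      using tangential_part_quad_form[OF sym u_def]
      by (simp add: B_def vec_eq_iff matrix_vector_mult_def inner_vec_def sum_negf)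
    ultimately show ?thesis using nsd[of u] by simp
  qed
  ultimately have "(\<Sum>i\<in>UNIV. \<Sum>j\<in>UNIV. (B$i$j)\<^sup>2) \<le> (trace B)\<^sup>2"
    by (rule psd_frobenius_le_trace_sq)
  moreover have "trace B = - trace (tangential_part H g)"
    by (simp add: B_def trace_def sum_negf)
  moreover have "(\<Sum>i\<in>UNIV. \<Sum>j\<in>UNIV. (B$i$j)\<^sup>2) = (\<Sum>i\<in>UNIV. \<Sum>j\<in>UNIV. (tangential_part H g $ i $ j)\<^sup>2)"
    by (simp add: B_def)
  ultimately have "(g \<bullet> g)^4 * (\<Sum>i\<in>UNIV. \<Sum>j\<in>UNIV. (H$i$j)\<^sup>2)
      - 2 * (g \<bullet> g)^3 * ((H *v g) \<bullet> (H *v g)) + (g \<bullet> g)\<^sup>2 * (g \<bullet> (H *v g))\<^sup>2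
      \<le> ((g \<bullet> g)\<^sup>2 * trace H - (g \<bullet> g) * (g \<bullet> (H *v g)))\<^sup>2"
    by (simp add: frobenius_tangential_part[OF sym] trace_tangential_part) (metis power2_commute)
  then have "(g \<bullet> g)^3 * 0 \<le> (g \<bullet> g)^3 * ((g \<bullet> g) * ((trace H)\<^sup>2 - (\<Sum>i\<in>UNIV. \<Sum>j\<in>UNIV. (H$i$j)\<^sup>2))
      - 2 * (trace H * (g \<bullet> (H *v g)) - (H *v g) \<bullet> (H *v g)))"
    by (simp add: algebra_simps power2_eq_square power3_eq_cube power4_eq_xxxx)
  moreover have "0 < (g \<bullet> g)^3" using \<open>g \<noteq> 0\<close> by simp
  ultimately have "0 \<le> (g \<bullet> g) * ((trace H)\<^sup>2 - (\<Sum>i\<in>UNIV. \<Sum>j\<in>UNIV. (H$i$j)\<^sup>2))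
      - 2 * (trace H * (g \<bullet> (H *v g)) - (H *v g) \<bullet> (H *v g))"
    by (rule mult_left_le_imp_le)
  then show ?thesis by simp
qed

section \<open>The divergence of the field\<close>

lemma sum_third_pd_swap:
  fixes T :: "'n::finite \<Rightarrow> 'n \<Rightarrow> 'n \<Rightarrow> real"
  assumes "\<And>i k. T i k k = T k k i"
  shows "(\<Sum>i\<in>UNIV. (\<Sum>k\<in>UNIV. T i k k) * g i) = (\<Sum>i\<in>UNIV. \<Sum>j\<in>UNIV. T i i j * g j)"
proof -
  have "(\<Sum>i\<in>UNIV. (\<Sum>k\<in>UNIV. T i k k) * g i) = (\<Sum>i\<in>UNIV. \<Sum>k\<in>UNIV. T k k i * g i)"
    unfolding sum_distrib_right by (intro sum.cong refl) (metis assms)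
  also have "\<dots> = (\<Sum>k\<in>UNIV. \<Sum>i\<in>UNIV. T k k i * g i)" by (rule sum.swap)
  finally show ?thesis .
qed

lemma pd_field_component:
  fixes v :: "real^'n \<Rightarrow> real"
  assumes sm: "smooth_on U v" and x: "x \<in> U" and "grad v x \<noteq> 0"
  defines "g \<equiv> grad v x" and "H \<equiv> hessian v x"
  shows "pd i (\<lambda>y. ((1 / (norm (grad v y))\<^sup>2) *\<^sub>R
                  (laplacian v y *\<^sub>R grad v y - hessian v y *v grad v y)) $ i) x
    = (((\<Sum>k\<in>UNIV. pd i (pd k (pd k v)) x) * g$i + H$i$i * trace H
          - (\<Sum>j\<in>UNIV. pd i (pd i (pd j v)) x * g$j + H$i$j * H$i$j)) * (g \<bullet> g)
        - (trace H * g$i - (H *v g)$i) * (2 * (H *v g)$i)) / ((g \<bullet> g) * (g \<bullet> g))"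
proof -
  have norm_grad: "(norm (grad v y))\<^sup>2 = (\<Sum>k\<in>UNIV. pd k v y * pd k v y)" for y
    by (simp add: power2_norm_eq_inner inner_vec_def grad_def)
  have component: "(\<lambda>y. ((1 / (norm (grad v y))\<^sup>2) *\<^sub>R
                  (laplacian v y *\<^sub>R grad v y - hessian v y *v grad v y)) $ i)
     = (\<lambda>y. ((\<Sum>k\<in>UNIV. pd k (pd k v) y) * pd i v y - (\<Sum>j\<in>UNIV. pd i (pd j v) y * pd j v y))
            / (\<Sum>k\<in>UNIV. pd k v y * pd k v y))"
    unfolding norm_grad by (simp add: fun_eq_iff laplacian_def matrix_vector_mult_def grad_def hessian_def)
  have d1: "((\<lambda>t. pd k v (x + t *\<^sub>R axis i 1)) has_real_derivative pd i (pd k v) x) (at 0)" for k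
    using smooth_on_has_pd[OF sm x, of "[k]"] by simp
  have d2: "((\<lambda>t. pd k (pd l v) (x + t *\<^sub>R axis i 1)) has_real_derivative pd i (pd k (pd l v)) x) (at 0)"
    for k l
    using smooth_on_has_pd[OF sm x, of "[k, l]"] by simp
  have "g \<bullet> g \<noteq> 0" using \<open>grad v x \<noteq> 0\<close> by (simp add: g_def)
  then have "(\<Sum>k\<in>UNIV. pd k v x * pd k v x) \<noteq> 0" by (simp add: g_def grad_def inner_vec_def)
  then show ?thesis
    unfolding component
    apply (intro pd_eqI)
    apply (rule DERIV_cong)
     apply (rule DERIV_divide)
       apply (rule DERIV_diff DERIV_mult DERIV_sum d1 d2)+
    by (simp_all add: g_def H_def grad_def hessian_def trace_def inner_vec_def
        matrix_vector_mult_def algebra_simps sum.distrib sum_subtractf sum_distrib_left[of 2, symmetric])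
qed

lemma divergence_formula:
  fixes v :: "real^'n \<Rightarrow> real"
  assumes sm: "smooth_on U v" and U: "open U" and x: "x \<in> U" and "grad v x \<noteq> 0"
  defines "g \<equiv> grad v x" and "H \<equiv> hessian v x"
  shows "divergence (\<lambda>y. (1 / (norm (grad v y))\<^sup>2) *\<^sub>R
                  (laplacian v y *\<^sub>R grad v y - hessian v y *v grad v y)) x
    = ((g \<bullet> g) * ((trace H)\<^sup>2 - (\<Sum>i\<in>UNIV. \<Sum>j\<in>UNIV. (H$i$j)\<^sup>2))
        - 2 * (trace H * (g \<bullet> (H *v g)) - (H *v g) \<bullet> (H *v g))) / (g \<bullet> g)\<^sup>2"
proof -
  define T where "T i k l = pd i (pd k (pd l v)) x" for i k l
  have "(\<Sum>i\<in>UNIV. (\<Sum>k\<in>UNIV. T i k k) * g$i + H$i$i * trace H - (\<Sum>j\<in>UNIV. T i i j * g$j + H$i$j * H$i$j))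
      = (\<Sum>i\<in>UNIV. (\<Sum>k\<in>UNIV. T i k k) * g$i) - (\<Sum>i\<in>UNIV. \<Sum>j\<in>UNIV. T i i j * g$j)
        + (trace H)\<^sup>2 - (\<Sum>i\<in>UNIV. \<Sum>j\<in>UNIV. (H$i$j)\<^sup>2)"
    by (simp add: sum.distrib sum_subtractf trace_def sum_distrib_right[symmetric] power2_eq_square)
  also have "\<dots> = (trace H)\<^sup>2 - (\<Sum>i\<in>UNIV. \<Sum>j\<in>UNIV. (H$i$j)\<^sup>2)"
  proof -
    have "(\<Sum>i\<in>UNIV. (\<Sum>k\<in>UNIV. T i k k) * g$i) = (\<Sum>i\<in>UNIV. \<Sum>j\<in>UNIV. T i i j * g$j)"
      by (rule sum_third_pd_swap) (unfold T_def, rule smooth_on_third_pd_commute[OF sm U x])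
    then show ?thesis by simp
  qed
  finally have sum_numerator:
    "(\<Sum>i\<in>UNIV. (\<Sum>k\<in>UNIV. T i k k) * g$i + H$i$i * trace H - (\<Sum>j\<in>UNIV. T i i j * g$j + H$i$j * H$i$j))
      = (trace H)\<^sup>2 - (\<Sum>i\<in>UNIV. \<Sum>j\<in>UNIV. (H$i$j)\<^sup>2)" .
  have sum_correction: "(\<Sum>i\<in>UNIV. (trace H * g$i - (H *v g)$i) * (2 * (H *v g)$i))
      = 2 * (trace H * (g \<bullet> (H *v g)) - (H *v g) \<bullet> (H *v g))"
    by (simp add: inner_vec_def algebra_simps sum.distrib sum_subtractf sum_distrib_left)
  have "divergence (\<lambda>y. (1 / (norm (grad v y))\<^sup>2) *\<^sub>R
                  (laplacian v y *\<^sub>R grad v y - hessian v y *v grad v y)) x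
    = (\<Sum>i\<in>UNIV. (((\<Sum>k\<in>UNIV. T i k k) * g$i + H$i$i * trace H
          - (\<Sum>j\<in>UNIV. T i i j * g$j + H$i$j * H$i$j)) * (g \<bullet> g)
        - (trace H * g$i - (H *v g)$i) * (2 * (H *v g)$i)) / ((g \<bullet> g) * (g \<bullet> g)))"
    unfolding divergence_def T_def g_def H_def
    by (intro sum.cong refl pd_field_component[OF sm x \<open>grad v x \<noteq> 0\<close>])
  also have "\<dots> = ((\<Sum>i\<in>UNIV. (\<Sum>k\<in>UNIV. T i k k) * g$i + H$i$i * trace H
          - (\<Sum>j\<in>UNIV. T i i j * g$j + H$i$j * H$i$j)) * (g \<bullet> g)
        - (\<Sum>i\<in>UNIV. (trace H * g$i - (H *v g)$i) * (2 * (H *v g)$i))) / ((g \<bullet> g) * (g \<bullet> g))"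
    by (simp only: sum_divide_distrib[symmetric] sum_subtractf sum_distrib_right[symmetric])
  also have "\<dots> = ((g \<bullet> g) * ((trace H)\<^sup>2 - (\<Sum>i\<in>UNIV. \<Sum>j\<in>UNIV. (H$i$j)\<^sup>2))
        - 2 * (trace H * (g \<bullet> (H *v g)) - (H *v g) \<bullet> (H *v g))) / (g \<bullet> g)\<^sup>2"
    unfolding sum_numerator sum_correction by (simp add: power2_eq_square mult.commute)
  finally show ?thesis .
qed

theorem lemma6p2:
  fixes v :: "real^'n \<Rightarrow> real" and U :: "(real^'n) set"
  assumes "CARD('n) \<ge> 2"
    and "continuous_on UNIV v"
    and "quasi_concave v"
    and "open U" and "connected U" and "U \<noteq> {}"
    and "smooth_on U v"
    and "x \<in> U" and "grad v x \<noteq> 0"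
  shows "divergence
           (\<lambda>y. (1 / (norm (grad v y))\<^sup>2) *\<^sub>R
                  (laplacian v y *\<^sub>R grad v y - hessian v y *v grad v y)) x \<ge> 0"
proof -
  note sm = \<open>smooth_on U v\<close> and U = \<open>open U\<close> and x = \<open>x \<in> U\<close>
  have "2 * (trace (hessian v x) * (grad v x \<bullet> (hessian v x *v grad v x))
            - (hessian v x *v grad v x) \<bullet> (hessian v x *v grad v x))
      \<le> (grad v x \<bullet> grad v x) * ((trace (hessian v x))\<^sup>2 - (\<Sum>i\<in>UNIV. \<Sum>j\<in>UNIV. (hessian v x $ i $ j)\<^sup>2))"
    using quasi_concave_hessian_tangent_nonpos[OF \<open>quasi_concave v\<close> sm U x \<open>grad v x \<noteq> 0\<close>]
    by (intro tangentially_nsd_trace_inequality smooth_on_hessian_symmetric[OF sm U x] \<open>grad v x \<noteq> 0\<close>)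
  then show ?thesis
    unfolding divergence_formula[OF sm U x \<open>grad v x \<noteq> 0\<close>] by simp
qed

end
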